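(* Let $(M,g)$ be an $n$-dimensional Riemannian manifold with $n\geq 3$, let $V$ be a non-vanishing vector field on $M$ and $\lambda$ a smooth function on $M$ such that $$\frac{1}{2}\pounds_V g+\operatorname{Ric}=\left(\frac{\operatorname{scal}}{2}+\lambda\right)g .$$ Assume $V$ is torse-forming, i.e. $\nabla_X V=aX+\psi(X)V$ for all vector fields $X$, where $a$ is a smooth function and $\psi$ a $1$-form on $M$, and assume $\psi$ is a Codazzi tensor field, i.e. $(\nabla_X\psi)Y=(\nabla_Y\psi)X$ for all vector fields $X,Y$. Then $$\lambda=a+\frac{(n-1)(n-2)}{2|V|^2}V(a)-\frac{1}{2|V|^2}\big[(n-1)(n-2)a+(n-3)|V|^2\big]\psi(V).$$ Moreover, if $V$ is concircular, i.e. $\nabla_X V=aX$ for all $X$, with $a$ a non-zero constant, then (i) $\lambda=a$; and (ii) $M$ is Ricci-flat, i.e. $\operatorname{Ric}=0$.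
   Context: $\pounds_V$ is the Lie derivative in the direction of $V$, $\nabla$ the Levi-Civita connection, $\operatorname{Ric}$ the Ricci tensor and $\operatorname{scal}$ the scalar curvature of $g$. A pair $(V,\lambda)$ satisfying the displayed equation is called an almost Einstein soliton. *)

theory Defs
  imports "HOL-Analysis.Analysis"
begin

text \<open>Local-coordinate rendering of Riemannian geometry on an open set U of R^n
  (one coordinate chart). Vectors/covectors are component vectors in real^'n,
  the metric is the matrix of components g_ij.\<close>

definition pd :: "'n::finite \<Rightarrow> (real^'n \<Rightarrow> real) \<Rightarrow> real^'n \<Rightarrow> real" where
  "pd i f x = frechet_derivative f (at x) (axis i 1)"

fun pdl :: "'n::finite list \<Rightarrow> (real^'n \<Rightarrow> real) \<Rightarrow> real^'n \<Rightarrow> real" where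
  "pdl [] f = f"
| "pdl (i # is) f = pd i (pdl is f)"

definition smooth_on :: "(real^'n::finite) set \<Rightarrow> (real^'n \<Rightarrow> real) \<Rightarrow> bool" where
  "smooth_on U f \<longleftrightarrow> (\<forall>is. pdl is f differentiable_on U)"

definition riemannian_metric :: "(real^'n::finite) set \<Rightarrow> (real^'n \<Rightarrow> real^'n^'n) \<Rightarrow> bool" where
  "riemannian_metric U g \<longleftrightarrow> open U
     \<and> (\<forall>i j. smooth_on U (\<lambda>x. g x $ i $ j))
     \<and> (\<forall>x\<in>U. \<forall>i j. g x $ i $ j = g x $ j $ i)
     \<and> (\<forall>x\<in>U. \<forall>v::real^'n. v \<noteq> 0 \<longrightarrow> (\<Sum>i\<in>UNIV. \<Sum>j\<in>UNIV. g x $ i $ j * v $ i * v $ j) > 0)"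

definition ginv :: "(real^'n::finite \<Rightarrow> real^'n^'n) \<Rightarrow> real^'n \<Rightarrow> real^'n^'n" where
  "ginv g x = matrix_inv (g x)"

definition christoffel :: "(real^'n::finite \<Rightarrow> real^'n^'n) \<Rightarrow> 'n \<Rightarrow> 'n \<Rightarrow> 'n \<Rightarrow> real^'n \<Rightarrow> real" where
  "christoffel g k i j x = (1/2) * (\<Sum>l\<in>UNIV. ginv g x $ k $ l *
      (pd i (\<lambda>y. g y $ j $ l) x + pd j (\<lambda>y. g y $ i $ l) x - pd l (\<lambda>y. g y $ i $ j) x))"

definition ricci :: "(real^'n::finite \<Rightarrow> real^'n^'n) \<Rightarrow> 'n \<Rightarrow> 'n \<Rightarrow> real^'n \<Rightarrow> real" where
  "ricci g i j x = (\<Sum>k\<in>UNIV. pd k (christoffel g k i j) x)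
      - (\<Sum>k\<in>UNIV. pd j (christoffel g k i k) x)
      + (\<Sum>k\<in>UNIV. \<Sum>p\<in>UNIV. christoffel g k k p x * christoffel g p i j x
                              - christoffel g k j p x * christoffel g p i k x)"

definition scal :: "(real^'n::finite \<Rightarrow> real^'n^'n) \<Rightarrow> real^'n \<Rightarrow> real" where
  "scal g x = (\<Sum>i\<in>UNIV. \<Sum>j\<in>UNIV. ginv g x $ i $ j * ricci g i j x)"

definition lie_g :: "(real^'n::finite \<Rightarrow> real^'n) \<Rightarrow> (real^'n \<Rightarrow> real^'n^'n) \<Rightarrow> 'n \<Rightarrow> 'n \<Rightarrow> real^'n \<Rightarrow> real" where
  "lie_g V g i j x = (\<Sum>k\<in>UNIV. V x $ k * pd k (\<lambda>y. g y $ i $ j) x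
      + g x $ k $ j * pd i (\<lambda>y. V y $ k) x + g x $ i $ k * pd j (\<lambda>y. V y $ k) x)"

definition cov_vec :: "(real^'n::finite \<Rightarrow> real^'n^'n) \<Rightarrow> (real^'n \<Rightarrow> real^'n) \<Rightarrow> 'n \<Rightarrow> 'n \<Rightarrow> real^'n \<Rightarrow> real" where
  "cov_vec g V i k x = pd i (\<lambda>y. V y $ k) x + (\<Sum>j\<in>UNIV. christoffel g k i j x * V x $ j)"

definition cov_form :: "(real^'n::finite \<Rightarrow> real^'n^'n) \<Rightarrow> (real^'n \<Rightarrow> real^'n) \<Rightarrow> 'n \<Rightarrow> 'n \<Rightarrow> real^'n \<Rightarrow> real" where
  "cov_form g \<psi> i j x = pd i (\<lambda>y. \<psi> y $ j) x - (\<Sum>k\<in>UNIV. christoffel g k i j x * \<psi> x $ k)"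

definition sqnorm :: "(real^'n::finite \<Rightarrow> real^'n^'n) \<Rightarrow> (real^'n \<Rightarrow> real^'n) \<Rightarrow> real^'n \<Rightarrow> real" where
  "sqnorm g V x = (\<Sum>i\<in>UNIV. \<Sum>j\<in>UNIV. g x $ i $ j * V x $ i * V x $ j)"

definition smooth_field :: "(real^'n::finite) set \<Rightarrow> (real^'n \<Rightarrow> real^'n) \<Rightarrow> bool" where
  "smooth_field U V \<longleftrightarrow> (\<forall>k. smooth_on U (\<lambda>x. V x $ k))"

definition almost_einstein_soliton ::
  "(real^'n::finite) set \<Rightarrow> (real^'n \<Rightarrow> real^'n^'n) \<Rightarrow> (real^'n \<Rightarrow> real^'n) \<Rightarrow> (real^'n \<Rightarrow> real) \<Rightarrow> bool" where
  "almost_einstein_soliton U g V lam \<longleftrightarrow> smooth_field U V \<and> smooth_on U lam \<and>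
     (\<forall>x\<in>U. \<forall>i j. (1/2) * lie_g V g i j x + ricci g i j x = (scal g x / 2 + lam x) * g x $ i $ j)"

definition torse_forming ::
  "(real^'n::finite) set \<Rightarrow> (real^'n \<Rightarrow> real^'n^'n) \<Rightarrow> (real^'n \<Rightarrow> real^'n) \<Rightarrow> (real^'n \<Rightarrow> real) \<Rightarrow> (real^'n \<Rightarrow> real^'n) \<Rightarrow> bool" where
  "torse_forming U g V a \<psi> \<longleftrightarrow> smooth_on U a \<and> smooth_field U \<psi> \<and>
     (\<forall>x\<in>U. \<forall>i k. cov_vec g V i k x = a x * (if i = k then 1 else 0) + \<psi> x $ i * V x $ k)"

definition codazzi :: "(real^'n::finite) set \<Rightarrow> (real^'n \<Rightarrow> real^'n^'n) \<Rightarrow> (real^'n \<Rightarrow> real^'n) \<Rightarrow> bool" where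
  "codazzi U g \<psi> \<longleftrightarrow> (\<forall>x\<in>U. \<forall>i j. cov_form g \<psi> i j x = cov_form g \<psi> j i x)"

definition concircular ::
  "(real^'n::finite) set \<Rightarrow> (real^'n \<Rightarrow> real^'n^'n) \<Rightarrow> (real^'n \<Rightarrow> real^'n) \<Rightarrow> (real^'n \<Rightarrow> real) \<Rightarrow> bool" where
  "concircular U g V a \<longleftrightarrow> smooth_on U a \<and>
     (\<forall>x\<in>U. \<forall>i k. cov_vec g V i k x = a x * (if i = k then 1 else 0))"

definition dir_deriv :: "(real^'n::finite \<Rightarrow> real^'n) \<Rightarrow> (real^'n \<Rightarrow> real) \<Rightarrow> real^'n \<Rightarrow> real" where
  "dir_deriv V f x = (\<Sum>i\<in>UNIV. V x $ i * pd i f x)"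

definition pair_form :: "(real^'n::finite \<Rightarrow> real^'n) \<Rightarrow> (real^'n \<Rightarrow> real^'n) \<Rightarrow> real^'n \<Rightarrow> real" where
  "pair_form \<psi> V x = (\<Sum>i\<in>UNIV. \<psi> x $ i * V x $ i)"

end

theory Submission
  imports Defs
begin

text \<open>In coordinates the torse-forming condition prescribes \<open>\<partial>\<^sub>i V\<^sup>k\<close>. Commuting
  \<open>\<partial>\<^sub>k \<partial>\<^sub>i V\<^sup>k = \<partial>\<^sub>i \<partial>\<^sub>k V\<^sup>k\<close> (Schwarz) and contracting gives the
  contracted Ricci identity \<open>Ric(X, V) = (1 - n) (X(a) - a \<psi>(X))\<close>, where the Codazzi property
  of \<open>\<psi>\<close> cancels the derivatives of \<open>\<psi>\<close>. On the other hand the torse-forming condition gives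
  \<open>\<pounds>\<^sub>V g = 2 a g + \<psi> \<otimes> V\<^sup>\<flat> + V\<^sup>\<flat> \<otimes> \<psi>\<close>, so the soliton equation says
  \<open>Ric = \<kappa> g - (\<psi> \<otimes> V\<^sup>\<flat> + V\<^sup>\<flat> \<otimes> \<psi>)/2\<close> with \<open>\<kappa> = scal/2 + \<lambda> - a\<close>.
  Tracing yields \<open>scal = n \<kappa> - \<psi>(V)\<close>, and evaluating at \<open>(V, V)\<close> yields
  \<open>Ric(V, V) = (\<kappa> - \<psi>(V)) |V|\<^sup>2\<close>; comparing the two expressions for \<open>Ric(V, V)\<close> and
  solving for \<open>\<lambda>\<close> gives the formula. For a concircular field with constant \<open>a\<close> we have
  \<open>\<psi> = 0\<close> and \<open>V(a) = 0\<close>, hence \<open>\<kappa> = 0\<close>, so \<open>Ric = 0\<close>, \<open>scal = 0\<close> and \<open>\<lambda> = a\<close>.\<close>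

section \<open>Partial derivatives\<close>

lemma pd_eq_has_derivative: "(f has_derivative f') (at x) \<Longrightarrow> pd i f x = f' (axis i 1)"
  unfolding pd_def using frechet_derivative_at by metis

lemma pd_const [simp]: "pd i (\<lambda>y. c) x = 0"
  unfolding pd_def by simp

lemma pd_add:
  "f differentiable at x \<Longrightarrow> h differentiable at x \<Longrightarrow>
     pd i (\<lambda>y. f y + h y) x = pd i f x + pd i h x"
  by (subst pd_eq_has_derivative[OF has_derivative_add[OF
        frechet_derivative_works[THEN iffD1] frechet_derivative_works[THEN iffD1]]]) (auto simp: pd_def)

lemma pd_diff:
  "f differentiable at x \<Longrightarrow> h differentiable at x \<Longrightarrow>
     pd i (\<lambda>y. f y - h y) x = pd i f x - pd i h x"
  by (subst pd_eq_has_derivative[OF has_derivative_diff[OF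
        frechet_derivative_works[THEN iffD1] frechet_derivative_works[THEN iffD1]]]) (auto simp: pd_def)

lemma pd_mult:
  "f differentiable at x \<Longrightarrow> h differentiable at x \<Longrightarrow>
     pd i (\<lambda>y. f y * h y) x = f x * pd i h x + pd i f x * h x"
  by (subst pd_eq_has_derivative[OF has_derivative_mult[OF
        frechet_derivative_works[THEN iffD1] frechet_derivative_works[THEN iffD1]]]) (auto simp: pd_def)

lemma pd_sum:
  "finite S \<Longrightarrow> (\<And>s. s \<in> S \<Longrightarrow> f s differentiable at x) \<Longrightarrow>
     pd i (\<lambda>y. \<Sum>s\<in>S. f s y) x = (\<Sum>s\<in>S. pd i (f s) x)"
  by (subst pd_eq_has_derivative[OF has_derivative_sum[OF frechet_derivative_works[THEN iffD1]]])
     (auto simp: pd_def)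

lemma pd_cong_open:
  assumes "open U" "x \<in> U" "\<And>y. y \<in> U \<Longrightarrow> f y = h y"
  shows "pd i f x = pd i h x"
proof -
  have "(f has_derivative f') (at x) \<longleftrightarrow> (h has_derivative f') (at x)" for f'
    using assms by (metis has_derivative_transform_within_open)
  then show ?thesis unfolding pd_def frechet_derivative_def by simp
qed

lemma differentiable_at_cong_open:
  "open U \<Longrightarrow> x \<in> U \<Longrightarrow> (\<And>y. y \<in> U \<Longrightarrow> f y = h y) \<Longrightarrow> f differentiable at x \<Longrightarrow>
     h differentiable at x"
  unfolding differentiable_def by (metis has_derivative_transform_within_open)

lemma smooth_on_differentiable_at:
  "smooth_on U f \<Longrightarrow> open U \<Longrightarrow> x \<in> U \<Longrightarrow> pdl is f differentiable at x"
  unfolding smooth_on_def using differentiable_on_eq_differentiable_at by blast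

lemma smooth_field_differentiable_at:
  "smooth_field U V \<Longrightarrow> open U \<Longrightarrow> x \<in> U \<Longrightarrow> pdl is (\<lambda>y. V y $ k) differentiable at x"
  unfolding smooth_field_def using smooth_on_differentiable_at by blast

lemma pdl_const: "pdl is (\<lambda>x. c) = (\<lambda>x. if is = [] then c else 0)"
  by (induction "is") simp_all

lemma smooth_on_const: "smooth_on U (\<lambda>x. c)"
  unfolding smooth_on_def pdl_const by simp

lemma has_real_derivative_along_axis:
  assumes "f differentiable at (p + s *\<^sub>R axis i 1)"
  shows "((\<lambda>s. f (p + s *\<^sub>R axis i 1)) has_real_derivative pd i f (p + s *\<^sub>R axis i 1)) (at s)"
proof -
  let ?F = "frechet_derivative f (at (p + s *\<^sub>R axis i 1))"
  have "((\<lambda>s. p + s *\<^sub>R axis i 1) has_derivative (\<lambda>h. h *\<^sub>R axis i 1)) (at s)"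
    by (auto intro!: derivative_eq_intros)
  from diff_chain_at[OF this frechet_derivative_works[THEN iffD1, OF assms]]
  have "((\<lambda>s. f (p + s *\<^sub>R axis i 1)) has_derivative (\<lambda>h. ?F (h *\<^sub>R axis i 1))) (at s)"
    by (simp add: o_def)
  moreover have "(\<lambda>h. ?F (h *\<^sub>R axis i 1)) = (\<lambda>h. pd i f (p + s *\<^sub>R axis i 1) * h)"
    using linear_frechet_derivative[OF assms] by (auto simp: pd_def linear_cmul)
  ultimately show ?thesis by (simp add: has_field_derivative_def)
qed

lemma second_difference_mean_value:
  fixes f :: "real^'n::finite \<Rightarrow> real"
  assumes ball: "ball x d \<subseteq> U" and h: "0 < h" "2 * h < d"
    and df: "\<forall>y\<in>U. f differentiable at y" and dfi: "\<forall>y\<in>U. pd i f differentiable at y"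
  shows "\<exists>p. dist p x < d \<and>
     f (x + h *\<^sub>R axis i 1 + h *\<^sub>R axis j 1) - f (x + h *\<^sub>R axis i 1) - f (x + h *\<^sub>R axis j 1) + f x
       = h * h * pd j (pd i f) p"
proof -
  let ?ei = "axis i 1 :: real^'n" and ?ej = "axis j 1 :: real^'n"
  have near: "dist (x + s *\<^sub>R ?ei + t *\<^sub>R ?ej) x < d"
    if "0 \<le> s" "s \<le> h" "0 \<le> t" "t \<le> h" for s t
  proof -
    have "norm (s *\<^sub>R ?ei + t *\<^sub>R ?ej) \<le> norm (s *\<^sub>R ?ei) + norm (t *\<^sub>R ?ej)"
      by (rule norm_triangle_ineq)
    also have "\<dots> \<le> 2 * h" using that by simp
    finally show ?thesis using h by (simp add: dist_norm add.assoc)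
  qed
  have inU: "x + s *\<^sub>R ?ei + t *\<^sub>R ?ej \<in> U" if "0 \<le> s" "s \<le> h" "0 \<le> t" "t \<le> h" for s t
    using near[OF that] ball by (auto simp: dist_commute)
  define G where "G s = f (x + h *\<^sub>R ?ej + s *\<^sub>R ?ei) - f (x + s *\<^sub>R ?ei)" for s
  have "DERIV G s :> pd i f (x + h *\<^sub>R ?ej + s *\<^sub>R ?ei) - pd i f (x + s *\<^sub>R ?ei)"
    if "0 \<le> s" "s \<le> h" for s
  proof -
    have "x + h *\<^sub>R ?ej + s *\<^sub>R ?ei \<in> U" using inU[of s h] that h by (simp add: algebra_simps)
    moreover have "x + s *\<^sub>R ?ei \<in> U" using inU[of s 0] that h by simp
    ultimately show ?thesis
      unfolding G_def using df by (intro DERIV_diff has_real_derivative_along_axis) auto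
  qed
  from MVT2[OF h(1) this] obtain \<xi> where \<xi>: "0 < \<xi>" "\<xi> < h"
    and G: "G h - G 0 = (h - 0) * (pd i f (x + h *\<^sub>R ?ej + \<xi> *\<^sub>R ?ei) - pd i f (x + \<xi> *\<^sub>R ?ei))"
    by blast
  define H where "H t = pd i f (x + \<xi> *\<^sub>R ?ei + t *\<^sub>R ?ej)" for t
  have "DERIV H t :> pd j (pd i f) (x + \<xi> *\<^sub>R ?ei + t *\<^sub>R ?ej)" if "0 \<le> t" "t \<le> h" for t
    unfolding H_def using dfi inU[of \<xi> t] that \<xi> by (intro has_real_derivative_along_axis) auto
  from MVT2[OF h(1) this] obtain \<eta> where \<eta>: "0 < \<eta>" "\<eta> < h"
    and H: "H h - H 0 = (h - 0) * pd j (pd i f) (x + \<xi> *\<^sub>R ?ei + \<eta> *\<^sub>R ?ej)"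
    by blast
  have "H h - H 0 = pd i f (x + h *\<^sub>R ?ej + \<xi> *\<^sub>R ?ei) - pd i f (x + \<xi> *\<^sub>R ?ei)"
    unfolding H_def by (simp add: algebra_simps)
  then have "G h - G 0 = h * h * pd j (pd i f) (x + \<xi> *\<^sub>R ?ei + \<eta> *\<^sub>R ?ej)"
    using G H by simp
  then show ?thesis
    using near[of \<xi> \<eta>] \<xi> \<eta> unfolding G_def by (intro exI[of _ "x + \<xi> *\<^sub>R ?ei + \<eta> *\<^sub>R ?ej"])
      (simp add: algebra_simps)
qed

lemma pd_commute:
  fixes f :: "real^'n::finite \<Rightarrow> real"
  assumes U: "open U" "x \<in> U"
    and df: "\<forall>y\<in>U. f differentiable at y"
    and dfi: "\<forall>y\<in>U. pd i f differentiable at y" and dfj: "\<forall>y\<in>U. pd j f differentiable at y"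
    and cont_ij: "isCont (pd j (pd i f)) x" and cont_ji: "isCont (pd i (pd j f)) x"
  shows "pd j (pd i f) x = pd i (pd j f) x"
proof (rule ccontr)
  let ?D1 = "pd j (pd i f) x" and ?D2 = "pd i (pd j f) x"
  assume "?D1 \<noteq> ?D2"
  define e where "e = \<bar>?D1 - ?D2\<bar> / 2"
  have e: "e > 0" using \<open>?D1 \<noteq> ?D2\<close> by (simp add: e_def)
  obtain r where r: "r > 0" "ball x r \<subseteq> U" using U open_contains_ball by blast
  obtain d1 where d1: "d1 > 0" "\<forall>y. dist y x < d1 \<longrightarrow> dist (pd j (pd i f) y) ?D1 < e"
    using cont_ij e unfolding continuous_at_eps_delta by blast
  obtain d2 where d2: "d2 > 0" "\<forall>y. dist y x < d2 \<longrightarrow> dist (pd i (pd j f) y) ?D2 < e"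
    using cont_ji e unfolding continuous_at_eps_delta by blast
  define d where "d = min r (min d1 d2)"
  have d: "ball x d \<subseteq> U" using r by (auto simp: d_def)
  define h where "h = d / 3"
  have h: "0 < h" "2 * h < d" using r d1 d2 by (auto simp: h_def d_def)
  obtain p1 where p1: "dist p1 x < d"
    "f (x + h *\<^sub>R axis i 1 + h *\<^sub>R axis j 1) - f (x + h *\<^sub>R axis i 1) - f (x + h *\<^sub>R axis j 1) + f x
       = h * h * pd j (pd i f) p1"
    using second_difference_mean_value[OF d h df dfi] by blast
  obtain p2 where p2: "dist p2 x < d"
    "f (x + h *\<^sub>R axis j 1 + h *\<^sub>R axis i 1) - f (x + h *\<^sub>R axis j 1) - f (x + h *\<^sub>R axis i 1) + f x
       = h * h * pd i (pd j f) p2"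
    using second_difference_mean_value[OF d h df dfj] by blast
  have "h * h * pd j (pd i f) p1 = h * h * pd i (pd j f) p2"
    using p1(2) p2(2) by (simp add: algebra_simps)
  then have eq: "pd j (pd i f) p1 = pd i (pd j f) p2" using h by simp
  have "dist (pd j (pd i f) p1) ?D1 < e" "dist (pd i (pd j f) p2) ?D2 < e"
    using d1 d2 p1 p2 by (auto simp: d_def)
  then show False
    using eq unfolding e_def by (simp add: dist_real_def abs_if split: if_splits)
qed


section \<open>The metric and its Christoffel symbols\<close>

lemma metric_sym: "riemannian_metric U g \<Longrightarrow> x \<in> U \<Longrightarrow> g x $ i $ j = g x $ j $ i"
  unfolding riemannian_metric_def by blast

lemma metric_differentiable_at:
  "riemannian_metric U g \<Longrightarrow> x \<in> U \<Longrightarrow> pdl is (\<lambda>y. g y $ i $ j) differentiable at x"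
  using smooth_on_differentiable_at unfolding riemannian_metric_def by blast

lemma sqnorm_pos: "riemannian_metric U g \<Longrightarrow> x \<in> U \<Longrightarrow> V x \<noteq> 0 \<Longrightarrow> sqnorm g V x > 0"
  unfolding riemannian_metric_def sqnorm_def by blast

lemma metric_invertible:
  assumes "riemannian_metric U g" "x \<in> U"
  shows "invertible (g x)"
proof -
  have "v = 0" if "g x *v v = 0" for v
  proof -
    have "(\<Sum>i\<in>UNIV. \<Sum>j\<in>UNIV. g x $ i $ j * v $ i * v $ j) = (\<Sum>i\<in>UNIV. v $ i * (g x *v v) $ i)"
      by (simp add: matrix_vector_mult_def sum_distrib_left mult_ac)
    also have "\<dots> = 0" using that by simp
    finally show "v = 0" using assms unfolding riemannian_metric_def by force
  qed
  then obtain B where "B ** g x = mat 1" using matrix_left_invertible_ker by blast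
  then show ?thesis unfolding invertible_def using matrix_left_right_inverse by blast
qed

lemma metric_ginv_mult:
  assumes "riemannian_metric U g" "x \<in> U"
  shows "g x ** ginv g x = mat 1" "ginv g x ** g x = mat 1"
proof -
  have "\<exists>A'. g x ** A' = mat 1 \<and> A' ** g x = mat 1"
    using metric_invertible[OF assms] unfolding invertible_def by blast
  then have "g x ** ginv g x = mat 1 \<and> ginv g x ** g x = mat 1"
    unfolding ginv_def matrix_inv_def by (rule someI_ex)
  then show "g x ** ginv g x = mat 1" "ginv g x ** g x = mat 1" by auto
qed

lemma metric_ginv_sum:
  assumes "riemannian_metric U g" "x \<in> U"
  shows "(\<Sum>k\<in>UNIV. g x $ i $ k * ginv g x $ k $ l) = (if i = l then 1 else 0)"
    and "(\<Sum>k\<in>UNIV. ginv g x $ i $ k * g x $ k $ l) = (if i = l then 1 else 0)"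
proof -
  have "(g x ** ginv g x) $ i $ l = (mat 1 :: real^'a^'a) $ i $ l"
    "(ginv g x ** g x) $ i $ l = (mat 1 :: real^'a^'a) $ i $ l"
    using metric_ginv_mult[OF assms] by simp_all
  then show "(\<Sum>k\<in>UNIV. g x $ i $ k * ginv g x $ k $ l) = (if i = l then 1 else 0)"
    "(\<Sum>k\<in>UNIV. ginv g x $ i $ k * g x $ k $ l) = (if i = l then 1 else 0)"
    by (simp_all add: matrix_matrix_mult_def mat_def)
qed

lemma ginv_cramer:
  assumes "riemannian_metric U g" "x \<in> U"
  shows "ginv g x $ k $ l = det (\<chi> i j. if j = k then axis l 1 $ i else g x $ i $ j) / det (g x)"
proof -
  have d: "det (g x) \<noteq> 0" using metric_invertible[OF assms] invertible_det_nz by blast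
  have "g x *v (ginv g x *v axis l 1) = axis l 1"
    by (simp add: matrix_vector_mul_assoc metric_ginv_mult[OF assms])
  then have "ginv g x *v axis l 1
      = (\<chi> k. det (\<chi> i j. if j = k then axis l 1 $ i else g x $ i $ j) / det (g x))"
    using cramer[OF d] by blast
  then show ?thesis by (simp add: matrix_vector_mult_basis column_def fun_eq_iff)
qed

lemma differentiable_prod:
  fixes f :: "'i \<Rightarrow> 'a::real_normed_vector \<Rightarrow> 'b::real_normed_field"
  assumes "\<And>i. i \<in> I \<Longrightarrow> f i differentiable at x"
  shows "(\<lambda>y. \<Prod>i\<in>I. f i y) differentiable at x"
proof -
  obtain D where "\<forall>i\<in>I. (f i has_derivative D i) (at x)"
    using assms unfolding differentiable_def by metis
  then show ?thesis unfolding differentiable_def by (blast intro: has_derivative_prod)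
qed

lemma differentiable_det:
  fixes A :: "'a::real_normed_vector \<Rightarrow> real^'n::finite^'n"
  assumes "\<And>i j. (\<lambda>y. A y $ i $ j) differentiable at x"
  shows "(\<lambda>y. det (A y)) differentiable at x"
  unfolding det_def
  by (intro differentiable_sum ballI differentiable_mult differentiable_const differentiable_prod assms)
     (simp add: finite_permutations)

lemma ginv_differentiable:
  assumes m: "riemannian_metric U g" and x: "x \<in> U"
  shows "(\<lambda>y. ginv g y $ k $ l) differentiable at x"
proof -
  have U: "open U" using m unfolding riemannian_metric_def by blast
  have dg: "(\<lambda>y. g y $ i $ j) differentiable at x" for i j
    using metric_differentiable_at[OF m x, of "[]"] by simp
  have "(\<lambda>y. if j = k then axis l 1 $ i else g y $ i $ j) differentiable at x" for i j
    using dg by (cases "j = k") simp_all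
  then have "(\<lambda>y. det (\<chi> i j. if j = k then axis l 1 $ i else g y $ i $ j) / det (g y)) differentiable at x"
    using dg metric_invertible[OF m x]
    by (intro differentiable_divide differentiable_det) (auto simp: invertible_det_nz)
  then show ?thesis
    by (rule differentiable_at_cong_open[OF U x, rotated]) (simp add: ginv_cramer[OF m])
qed

lemma christoffel_differentiable:
  assumes "riemannian_metric U g" "x \<in> U"
  shows "christoffel g k i j differentiable at x"
proof -
  have "(\<lambda>y. christoffel g k i j y) differentiable at x"
    unfolding christoffel_def
    using metric_differentiable_at[OF assms, of "[_]"] ginv_differentiable[OF assms]
    by (intro differentiable_mult differentiable_const differentiable_sum ballI
        differentiable_add differentiable_diff) auto
  then show ?thesis by simp
qed

lemma pd_metric_sym:
  assumes "riemannian_metric U g" "x \<in> U"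
  shows "pd l (\<lambda>y. g y $ i $ j) x = pd l (\<lambda>y. g y $ j $ i) x"
  using assms unfolding riemannian_metric_def by (intro pd_cong_open[of U]) auto

lemma christoffel_sym:
  assumes "riemannian_metric U g" "x \<in> U"
  shows "christoffel g k i j x = christoffel g k j i x"
  unfolding christoffel_def using pd_metric_sym[OF assms] by (simp add: algebra_simps)

lemma pd_christoffel_sym:
  assumes "riemannian_metric U g" "x \<in> U"
  shows "pd l (christoffel g k i j) x = pd l (christoffel g k j i) x"
  using assms christoffel_sym[OF assms(1)] unfolding riemannian_metric_def
  by (intro pd_cong_open[of U]) auto

lemmas mult_delta_simps = if_distrib[where f="\<lambda>x. x * _"] if_distrib[where f="\<lambda>x. _ * x"]

lemma metric_christoffel_lower:
  assumes "riemannian_metric U g" "x \<in> U"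
  shows "(\<Sum>k\<in>UNIV. g x $ j $ k * christoffel g k i m x)
     = (1/2) * (pd i (\<lambda>y. g y $ m $ j) x + pd m (\<lambda>y. g y $ i $ j) x - pd j (\<lambda>y. g y $ i $ m) x)"
proof -
  let ?D = "\<lambda>l. pd i (\<lambda>y. g y $ m $ l) x + pd m (\<lambda>y. g y $ i $ l) x - pd l (\<lambda>y. g y $ i $ m) x"
  have "(\<Sum>k\<in>UNIV. g x $ j $ k * christoffel g k i m x)
      = (1/2) * (\<Sum>k\<in>UNIV. \<Sum>l\<in>UNIV. g x $ j $ k * ginv g x $ k $ l * ?D l)"
    unfolding christoffel_def by (simp add: sum_distrib_left sum_distrib_right mult_ac)
  also have "(\<Sum>k\<in>UNIV. \<Sum>l\<in>UNIV. g x $ j $ k * ginv g x $ k $ l * ?D l)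
      = (\<Sum>l\<in>UNIV. (\<Sum>k\<in>UNIV. g x $ j $ k * ginv g x $ k $ l) * ?D l)"
    by (subst sum.swap) (simp add: sum_distrib_right)
  also have "\<dots> = ?D j"
    by (simp add: metric_ginv_sum[OF assms] mult_delta_simps cong: if_cong)
  finally show ?thesis by simp
qed


lemma sum_ricci_mult:
  fixes g :: "real^'n::finite \<Rightarrow> real^'n^'n"
  assumes m: "riemannian_metric U g" and x: "x \<in> U"
  shows "(\<Sum>j\<in>UNIV. ricci g j i x * v j)
       = (\<Sum>k\<in>UNIV. \<Sum>j\<in>UNIV. pd k (christoffel g k i j) x * v j)
       - (\<Sum>k\<in>UNIV. \<Sum>j\<in>UNIV. pd i (christoffel g k k j) x * v j)
       + (\<Sum>k\<in>UNIV. \<Sum>j\<in>UNIV. \<Sum>p\<in>UNIV. christoffel g k k j x * christoffel g j i p x * v p)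
       - (\<Sum>k\<in>UNIV. \<Sum>j\<in>UNIV. \<Sum>p\<in>UNIV. christoffel g k i j x * christoffel g j k p x * v p)"
proof -
  let ?G = "\<lambda>k i j. christoffel g k i j x"
  have sym: "?G k i j = ?G k j i" for k i j
    using christoffel_sym[OF m x] .
  have "ricci g j i x * v j = (\<Sum>k\<in>UNIV. pd k (christoffel g k i j) x * v j)
       - (\<Sum>k\<in>UNIV. pd i (christoffel g k k j) x * v j)
       + (\<Sum>k\<in>UNIV. \<Sum>p\<in>UNIV. ?G k k p * ?G p j i * v j)
       - (\<Sum>k\<in>UNIV. \<Sum>p\<in>UNIV. ?G k i p * ?G p j k * v j)" for j
  proof -
    have "(\<Sum>k\<in>UNIV. pd k (christoffel g k j i) x) = (\<Sum>k\<in>UNIV. pd k (christoffel g k i j) x)"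
      "(\<Sum>k\<in>UNIV. pd i (christoffel g k j k) x) = (\<Sum>k\<in>UNIV. pd i (christoffel g k k j) x)"
      using pd_christoffel_sym[OF m x] by simp_all
    then show ?thesis unfolding ricci_def
      by (simp add: left_diff_distrib distrib_right sum_distrib_right sum_subtractf)
  qed
  then have "(\<Sum>j\<in>UNIV. ricci g j i x * v j)
       = (\<Sum>j\<in>UNIV. \<Sum>k\<in>UNIV. pd k (christoffel g k i j) x * v j)
       - (\<Sum>j\<in>UNIV. \<Sum>k\<in>UNIV. pd i (christoffel g k k j) x * v j)
       + (\<Sum>j\<in>UNIV. \<Sum>k\<in>UNIV. \<Sum>p\<in>UNIV. ?G k k p * ?G p j i * v j)
       - (\<Sum>j\<in>UNIV. \<Sum>k\<in>UNIV. \<Sum>p\<in>UNIV. ?G k i p * ?G p j k * v j)"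
    by (simp add: sum.distrib sum_subtractf)
  also have "(\<Sum>j\<in>UNIV. \<Sum>k\<in>UNIV. \<Sum>p\<in>UNIV. ?G k k p * ?G p j i * v j)
      = (\<Sum>k\<in>UNIV. \<Sum>p\<in>UNIV. \<Sum>j\<in>UNIV. ?G k k p * ?G p j i * v j)"
    by (subst sum.swap) (rule sum.cong[OF refl], rule sum.swap)
  also have "\<dots> = (\<Sum>k\<in>UNIV. \<Sum>j\<in>UNIV. \<Sum>p\<in>UNIV. ?G k k j * ?G j i p * v p)"
    by (simp only: sym[of _ _ i])
  also have "(\<Sum>j\<in>UNIV. \<Sum>k\<in>UNIV. \<Sum>p\<in>UNIV. ?G k i p * ?G p j k * v j)
      = (\<Sum>k\<in>UNIV. \<Sum>p\<in>UNIV. \<Sum>j\<in>UNIV. ?G k i p * ?G p j k * v j)"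
    by (subst sum.swap) (rule sum.cong[OF refl], rule sum.swap)
  also have "\<dots> = (\<Sum>k\<in>UNIV. \<Sum>j\<in>UNIV. \<Sum>p\<in>UNIV. ?G k i j * ?G j k p * v p)"
    by (intro sum.cong refl) (metis sym)
  also have "(\<Sum>j\<in>UNIV. \<Sum>k\<in>UNIV. pd k (christoffel g k i j) x * v j)
      = (\<Sum>k\<in>UNIV. \<Sum>j\<in>UNIV. pd k (christoffel g k i j) x * v j)"
    by (rule sum.swap)
  also have "(\<Sum>j\<in>UNIV. \<Sum>k\<in>UNIV. pd i (christoffel g k k j) x * v j)
      = (\<Sum>k\<in>UNIV. \<Sum>j\<in>UNIV. pd i (christoffel g k k j) x * v j)"
    by (rule sum.swap)
  finally show ?thesis .
qed


section \<open>Torse-forming vector fields\<close>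

lemma pd_torse_forming:
  assumes "torse_forming U g V a \<psi>" "x \<in> U"
  shows "pd i (\<lambda>y. V y $ k) x = a x * (if i = k then 1 else 0) + \<psi> x $ i * V x $ k
           - (\<Sum>j\<in>UNIV. christoffel g k i j x * V x $ j)"
proof -
  have "cov_vec g V i k x = a x * (if i = k then 1 else 0) + \<psi> x $ i * V x $ k"
    using assms unfolding torse_forming_def by blast
  then show ?thesis unfolding cov_vec_def by linarith
qed

text \<open>The algebraic core of the contracted Ricci identity:
  \<open>dV m k\<close>, \<open>dP m k\<close>, \<open>dG m k i j\<close> and \<open>A m\<close> stand for the partial derivatives
  \<open>\<partial>\<^sub>m V\<^sup>k\<close>, \<open>\<partial>\<^sub>m \<psi>\<^sub>k\<close>, \<open>\<partial>\<^sub>m \<Gamma>\<^sup>k\<^sub>i\<^sub>j\<close> and \<open>\<partial>\<^sub>m a\<close>, and \<open>commute\<close> is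
  \<open>\<partial>\<^sub>k \<partial>\<^sub>i V\<^sup>k = \<partial>\<^sub>i \<partial>\<^sub>k V\<^sup>k\<close> expanded by the product rule.\<close>

lemma torse_forming_commutator_trace:
  fixes A P v :: "'n::finite \<Rightarrow> real" and a0 :: real
    and dP dV :: "'n \<Rightarrow> 'n \<Rightarrow> real" and G :: "'n \<Rightarrow> 'n \<Rightarrow> 'n \<Rightarrow> real"
    and dG :: "'n \<Rightarrow> 'n \<Rightarrow> 'n \<Rightarrow> 'n \<Rightarrow> real"
  assumes dV: "\<And>m k. dV m k = a0 * (if m = k then 1 else 0) + P m * v k - (\<Sum>j\<in>UNIV. G k m j * v j)"
    and G_sym: "\<And>k i j. G k i j = G k j i"
    and codazzi: "\<And>k i. dP k i - (\<Sum>m\<in>UNIV. G m k i * P m) = dP i k - (\<Sum>m\<in>UNIV. G m i k * P m)"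
    and commute: "\<And>k. (if i = k then 1 else 0) * A k + (P i * dV k k + dP k i * v k)
                 - (\<Sum>j\<in>UNIV. G k i j * dV k j + dG k k i j * v j)
               = A i + (P k * dV i k + dP i k * v k)
                 - (\<Sum>j\<in>UNIV. G k k j * dV i j + dG i k k j * v j)"
  shows "(\<Sum>k\<in>UNIV. \<Sum>j\<in>UNIV. dG k k i j * v j) - (\<Sum>k\<in>UNIV. \<Sum>j\<in>UNIV. dG i k k j * v j)
       + (\<Sum>k\<in>UNIV. \<Sum>j\<in>UNIV. \<Sum>p\<in>UNIV. G k k j * G j i p * v p)
       - (\<Sum>k\<in>UNIV. \<Sum>j\<in>UNIV. \<Sum>p\<in>UNIV. G k i j * G j k p * v p)
     = (1 - real CARD('n)) * (A i - a0 * P i)"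
proof -
  let ?n = "real CARD('n)"
  let ?pv = "\<Sum>k\<in>UNIV. P k * v k"
  let ?gv = "\<Sum>k\<in>UNIV. \<Sum>j\<in>UNIV. G k k j * v j"
  note expand = dV sum_distrib_left sum_subtractf sum.distrib algebra_simps mult_delta_simps
  have "(\<Sum>k\<in>UNIV. (if i = k then 1 else 0) * A k) = A i"
    by (simp add: mult_delta_simps cong: if_cong)
  moreover have "(\<Sum>k\<in>UNIV. P i * dV k k) = ?n * a0 * P i + P i * ?pv - P i * ?gv"
    by (simp add: expand cong: if_cong)
  moreover have "(\<Sum>k\<in>UNIV. \<Sum>j\<in>UNIV. G k i j * dV k j)
     = a0 * (\<Sum>k\<in>UNIV. G k i k) + (\<Sum>k\<in>UNIV. \<Sum>j\<in>UNIV. G k i j * P k * v j)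
       - (\<Sum>k\<in>UNIV. \<Sum>j\<in>UNIV. \<Sum>p\<in>UNIV. G k i j * G j k p * v p)"
    by (simp add: expand cong: if_cong)
  moreover have "(\<Sum>k\<in>UNIV. P k * dV i k)
     = a0 * P i + P i * ?pv - (\<Sum>k\<in>UNIV. \<Sum>j\<in>UNIV. G k i j * P k * v j)"
    by (simp add: expand cong: if_cong)
  moreover have "(\<Sum>k\<in>UNIV. \<Sum>j\<in>UNIV. G k k j * dV i j)
     = a0 * (\<Sum>k\<in>UNIV. G k i k) + P i * ?gv
       - (\<Sum>k\<in>UNIV. \<Sum>j\<in>UNIV. \<Sum>p\<in>UNIV. G k k j * G j i p * v p)"
    by (simp add: expand G_sym[of _ i] cong: if_cong)
  moreover have "(\<Sum>k\<in>UNIV. dP k i * v k) = (\<Sum>k\<in>UNIV. dP i k * v k)"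
  proof -
    have "dP k i = dP i k" for k
      using codazzi[of k i] G_sym[of _ k i] by simp
    then show ?thesis by simp
  qed
  moreover have "(\<Sum>k\<in>UNIV. (if i = k then 1 else 0) * A k + (P i * dV k k + dP k i * v k)
                 - (\<Sum>j\<in>UNIV. G k i j * dV k j + dG k k i j * v j))
          = (\<Sum>k\<in>UNIV. A i + (P k * dV i k + dP i k * v k)
                 - (\<Sum>j\<in>UNIV. G k k j * dV i j + dG i k k j * v j))"
    using commute by simp
  then have "(\<Sum>k\<in>UNIV. (if i = k then 1 else 0) * A k) + (\<Sum>k\<in>UNIV. P i * dV k k)
      + (\<Sum>k\<in>UNIV. dP k i * v k) - (\<Sum>k\<in>UNIV. \<Sum>j\<in>UNIV. G k i j * dV k j)
      - (\<Sum>k\<in>UNIV. \<Sum>j\<in>UNIV. dG k k i j * v j)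
    = ?n * A i + (\<Sum>k\<in>UNIV. P k * dV i k) + (\<Sum>k\<in>UNIV. dP i k * v k)
      - (\<Sum>k\<in>UNIV. \<Sum>j\<in>UNIV. G k k j * dV i j) - (\<Sum>k\<in>UNIV. \<Sum>j\<in>UNIV. dG i k k j * v j)"
    by (simp add: sum.distrib sum_subtractf)
  ultimately show ?thesis
    by (simp add: algebra_simps)
qed

lemma pd_torse_forming_expr:
  assumes da: "a differentiable at x" and d\<psi>: "(\<lambda>y. \<psi> y $ i) differentiable at x"
    and dV: "\<And>j. (\<lambda>y. V y $ j) differentiable at x" and d\<Gamma>: "\<And>j. \<Gamma> j differentiable at x"
  shows "pd m (\<lambda>y. a y * c + \<psi> y $ i * V y $ k - (\<Sum>j\<in>UNIV. \<Gamma> j y * V y $ j)) x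
     = c * pd m a x + (\<psi> x $ i * pd m (\<lambda>y. V y $ k) x + pd m (\<lambda>y. \<psi> y $ i) x * V x $ k)
       - (\<Sum>j\<in>UNIV. \<Gamma> j x * pd m (\<lambda>y. V y $ j) x + pd m (\<Gamma> j) x * V x $ j)"
proof -
  have "pd m (\<lambda>y. a y * c + \<psi> y $ i * V y $ k - (\<Sum>j\<in>UNIV. \<Gamma> j y * V y $ j)) x
     = pd m (\<lambda>y. a y * c) x + pd m (\<lambda>y. \<psi> y $ i * V y $ k) x
       - pd m (\<lambda>y. \<Sum>j\<in>UNIV. \<Gamma> j y * V y $ j) x"
    using assms by (simp add: pd_diff pd_add)
  also have "pd m (\<lambda>y. a y * c) x = c * pd m a x"
    using pd_mult[OF da differentiable_const, of m c] by simp
  also have "pd m (\<lambda>y. \<psi> y $ i * V y $ k) x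
      = \<psi> x $ i * pd m (\<lambda>y. V y $ k) x + pd m (\<lambda>y. \<psi> y $ i) x * V x $ k"
    using pd_mult[OF d\<psi> dV] by simp
  also have "pd m (\<lambda>y. \<Sum>j\<in>UNIV. \<Gamma> j y * V y $ j) x
      = (\<Sum>j\<in>UNIV. \<Gamma> j x * pd m (\<lambda>y. V y $ j) x + pd m (\<Gamma> j) x * V x $ j)"
    using d\<Gamma> dV by (simp add: pd_sum pd_mult)
  finally show ?thesis .
qed

lemma torse_forming_pd_commute:
  assumes m: "riemannian_metric U g" and sV: "smooth_field U V"
    and tf: "torse_forming U g V a \<psi>" and x: "x \<in> U"
  shows "(if i = k then 1 else 0) * pd k a x
         + (\<psi> x $ i * pd k (\<lambda>y. V y $ k) x + pd k (\<lambda>y. \<psi> y $ i) x * V x $ k)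
         - (\<Sum>j\<in>UNIV. christoffel g k i j x * pd k (\<lambda>y. V y $ j) x + pd k (christoffel g k i j) x * V x $ j)
     = pd i a x + (\<psi> x $ k * pd i (\<lambda>y. V y $ k) x + pd i (\<lambda>y. \<psi> y $ k) x * V x $ k)
         - (\<Sum>j\<in>UNIV. christoffel g k k j x * pd i (\<lambda>y. V y $ j) x + pd i (christoffel g k k j) x * V x $ j)"
proof -
  have U: "open U" using m unfolding riemannian_metric_def by blast
  have da: "a differentiable at x" and d\<psi>: "(\<lambda>y. \<psi> y $ l) differentiable at x" for l
    using tf smooth_on_differentiable_at[OF _ U x, of _ "[]"] smooth_field_differentiable_at[OF _ U x, of _ "[]"]
    unfolding torse_forming_def by auto
  have dV: "pdl ls (\<lambda>y. V y $ l) differentiable at y" if "y \<in> U" for l ls y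
    using smooth_field_differentiable_at[OF sV U that] .
  have "pd k (pd i (\<lambda>y. V y $ k)) x = pd i (pd k (\<lambda>y. V y $ k)) x"
    using dV[where ls="[]"] dV[where ls="[i]"] dV[where ls="[k]"]
      dV[OF x, where ls="[k, i]"] dV[OF x, where ls="[i, k]"]
    by (intro pd_commute[OF U x]) (auto intro: differentiable_imp_continuous_within)
  moreover have "pd l (pd m (\<lambda>y. V y $ k)) x = (if m = k then 1 else 0) * pd l a x
      + (\<psi> x $ m * pd l (\<lambda>y. V y $ k) x + pd l (\<lambda>y. \<psi> y $ m) x * V x $ k)
      - (\<Sum>j\<in>UNIV. christoffel g k m j x * pd l (\<lambda>y. V y $ j) x + pd l (christoffel g k m j) x * V x $ j)"
    for l m
  proof -
    have "pd l (pd m (\<lambda>y. V y $ k)) x = pd l (\<lambda>y. a y * (if m = k then 1 else 0) + \<psi> y $ m * V y $ k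
        - (\<Sum>j\<in>UNIV. christoffel g k m j y * V y $ j)) x"
      using pd_torse_forming[OF tf] by (intro pd_cong_open[OF U x]) auto
    also have "\<dots> = (if m = k then 1 else 0) * pd l a x
      + (\<psi> x $ m * pd l (\<lambda>y. V y $ k) x + pd l (\<lambda>y. \<psi> y $ m) x * V x $ k)
      - (\<Sum>j\<in>UNIV. christoffel g k m j x * pd l (\<lambda>y. V y $ j) x + pd l (christoffel g k m j) x * V x $ j)"
      using dV[OF x, where ls="[]"] christoffel_differentiable[OF m x]
      by (intro pd_torse_forming_expr[OF da d\<psi>]) auto
    finally show ?thesis .
  qed
  ultimately show ?thesis by simp
qed

lemma ricci_torse_forming_codazzi:
  fixes g :: "real^'n::finite \<Rightarrow> real^'n^'n"
  assumes m: "riemannian_metric U g" and sV: "smooth_field U V"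
    and tf: "torse_forming U g V a \<psi>" and cod: "codazzi U g \<psi>" and x: "x \<in> U"
  shows "(\<Sum>j\<in>UNIV. ricci g j i x * V x $ j) = (1 - real CARD('n)) * (pd i a x - a x * \<psi> x $ i)"
  unfolding sum_ricci_mult[OF m x]
proof (rule torse_forming_commutator_trace)
  show "pd m (\<lambda>y. V y $ k) x = a x * (if m = k then 1 else 0) + \<psi> x $ m * V x $ k
          - (\<Sum>j\<in>UNIV. christoffel g k m j x * V x $ j)" for m k
    using pd_torse_forming[OF tf x] .
  show "christoffel g k i j x = christoffel g k j i x" for k i j
    using christoffel_sym[OF m x] .
  show "pd k (\<lambda>y. \<psi> y $ i) x - (\<Sum>m\<in>UNIV. christoffel g m k i x * \<psi> x $ m)
      = pd i (\<lambda>y. \<psi> y $ k) x - (\<Sum>m\<in>UNIV. christoffel g m i k x * \<psi> x $ m)" for k i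
    using cod x unfolding codazzi_def cov_form_def by blast
qed (rule torse_forming_pd_commute[OF m sV tf x])

lemma ricci_V_V_torse_forming_codazzi:
  fixes g :: "real^'n::finite \<Rightarrow> real^'n^'n"
  assumes "riemannian_metric U g" "smooth_field U V"
    and "torse_forming U g V a \<psi>" "codazzi U g \<psi>" "x \<in> U"
  shows "(\<Sum>i\<in>UNIV. V x $ i * (\<Sum>j\<in>UNIV. ricci g j i x * V x $ j))
      = (1 - real CARD('n)) * (dir_deriv V a x - a x * pair_form \<psi> V x)"
  unfolding ricci_torse_forming_codazzi[OF assms] dir_deriv_def pair_form_def
  by (simp add: algebra_simps sum_subtractf sum_distrib_left sum.distrib)


section \<open>Almost Einstein solitons\<close>

definition flat :: "(real^'n::finite \<Rightarrow> real^'n^'n) \<Rightarrow> (real^'n \<Rightarrow> real^'n) \<Rightarrow> real^'n \<Rightarrow> 'n \<Rightarrow> real"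
  where "flat g V x j = (\<Sum>k\<in>UNIV. g x $ j $ k * V x $ k)"

lemma ginv_flat:
  assumes m: "riemannian_metric U g" and x: "x \<in> U"
  shows "(\<Sum>j\<in>UNIV. ginv g x $ i $ j * flat g V x j) = V x $ i"
    and "(\<Sum>j\<in>UNIV. ginv g x $ j $ i * flat g V x j) = V x $ i"
proof -
  have "(\<Sum>j\<in>UNIV. ginv g x $ i $ j * flat g V x j)
      = (\<Sum>j\<in>UNIV. \<Sum>k\<in>UNIV. ginv g x $ i $ j * g x $ j $ k * V x $ k)"
    unfolding flat_def by (simp add: sum_distrib_left mult_ac)
  also have "\<dots> = (\<Sum>k\<in>UNIV. (\<Sum>j\<in>UNIV. ginv g x $ i $ j * g x $ j $ k) * V x $ k)"
    by (subst sum.swap) (simp add: sum_distrib_right)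
  finally show "(\<Sum>j\<in>UNIV. ginv g x $ i $ j * flat g V x j) = V x $ i"
    by (simp add: metric_ginv_sum[OF m x] mult_delta_simps cong: if_cong)
  have "(\<Sum>j\<in>UNIV. ginv g x $ j $ i * flat g V x j)
      = (\<Sum>j\<in>UNIV. \<Sum>k\<in>UNIV. g x $ k $ j * ginv g x $ j $ i * V x $ k)"
    unfolding flat_def by (simp add: sum_distrib_left mult_ac metric_sym[OF m x, of j for j])
  also have "\<dots> = (\<Sum>k\<in>UNIV. (\<Sum>j\<in>UNIV. g x $ k $ j * ginv g x $ j $ i) * V x $ k)"
    by (subst sum.swap) (simp add: sum_distrib_right)
  finally show "(\<Sum>j\<in>UNIV. ginv g x $ j $ i * flat g V x j) = V x $ i"
    by (simp add: metric_ginv_sum[OF m x] mult_delta_simps cong: if_cong)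
qed

lemma scal_of_ricci_form:
  fixes g :: "real^'n::finite \<Rightarrow> real^'n^'n"
  assumes m: "riemannian_metric U g" and x: "x \<in> U"
    and ric: "\<And>i j. ricci g i j x = c * g x $ i $ j - (1/2) * (\<psi> x $ i * flat g V x j + \<psi> x $ j * flat g V x i)"
  shows "scal g x = real CARD('n) * c - pair_form \<psi> V x"
proof -
  let ?H = "ginv g x"
  have "(\<Sum>i\<in>UNIV. \<Sum>j\<in>UNIV. ?H $ i $ j * g x $ i $ j) = (\<Sum>i\<in>UNIV. \<Sum>j\<in>UNIV. ?H $ i $ j * g x $ j $ i)"
    using metric_sym[OF m x] by simp
  also have "\<dots> = (\<Sum>i\<in>(UNIV::'n set). 1)"
    by (simp add: metric_ginv_sum[OF m x])
  finally have trace: "(\<Sum>i\<in>UNIV. \<Sum>j\<in>UNIV. ?H $ i $ j * g x $ i $ j) = real CARD('n)"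
    by simp
  have "(\<Sum>i\<in>UNIV. \<Sum>j\<in>UNIV. ?H $ i $ j * (\<psi> x $ i * flat g V x j))
      = (\<Sum>i\<in>UNIV. \<psi> x $ i * (\<Sum>j\<in>UNIV. ?H $ i $ j * flat g V x j))"
    by (simp add: sum_distrib_left mult_ac)
  also have "\<dots> = pair_form \<psi> V x"
    by (simp add: ginv_flat[OF m x] pair_form_def)
  finally have t2: "(\<Sum>i\<in>UNIV. \<Sum>j\<in>UNIV. ?H $ i $ j * (\<psi> x $ i * flat g V x j)) = pair_form \<psi> V x" .
  have "(\<Sum>i\<in>UNIV. \<Sum>j\<in>UNIV. ?H $ i $ j * (\<psi> x $ j * flat g V x i))
      = (\<Sum>j\<in>UNIV. \<psi> x $ j * (\<Sum>i\<in>UNIV. ?H $ i $ j * flat g V x i))"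
    by (subst sum.swap) (simp add: sum_distrib_left mult_ac)
  also have "\<dots> = pair_form \<psi> V x"
    by (simp add: ginv_flat[OF m x] pair_form_def)
  finally have t3: "(\<Sum>i\<in>UNIV. \<Sum>j\<in>UNIV. ?H $ i $ j * (\<psi> x $ j * flat g V x i)) = pair_form \<psi> V x" .
  have "scal g x = c * (\<Sum>i\<in>UNIV. \<Sum>j\<in>UNIV. ?H $ i $ j * g x $ i $ j)
     - (1/2) * ((\<Sum>i\<in>UNIV. \<Sum>j\<in>UNIV. ?H $ i $ j * (\<psi> x $ i * flat g V x j))
               + (\<Sum>i\<in>UNIV. \<Sum>j\<in>UNIV. ?H $ i $ j * (\<psi> x $ j * flat g V x i)))"
    unfolding scal_def ric by (simp add: algebra_simps sum.distrib sum_subtractf sum_distrib_left)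
  then show ?thesis unfolding trace t2 t3 by simp
qed

lemma ricci_V_V_of_ricci_form:
  assumes m: "riemannian_metric U g" and x: "x \<in> U"
    and ric: "\<And>i j. ricci g i j x = c * g x $ i $ j - (1/2) * (\<psi> x $ i * flat g V x j + \<psi> x $ j * flat g V x i)"
  shows "(\<Sum>i\<in>UNIV. V x $ i * (\<Sum>j\<in>UNIV. ricci g j i x * V x $ j))
     = (c - pair_form \<psi> V x) * sqnorm g V x"
proof -
  have flat_sqnorm: "(\<Sum>i\<in>UNIV. flat g V x i * V x $ i) = sqnorm g V x"
    unfolding sqnorm_def flat_def by (simp add: sum_distrib_left sum_distrib_right mult_ac)
  have flat_sym: "(\<Sum>j\<in>UNIV. g x $ j $ i * V x $ j) = flat g V x i" for i
    unfolding flat_def using metric_sym[OF m x] by (simp add: mult_ac)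
  have "(\<Sum>j\<in>UNIV. ricci g j i x * V x $ j)
      = c * (\<Sum>j\<in>UNIV. g x $ j $ i * V x $ j)
        - (1/2) * (flat g V x i * pair_form \<psi> V x + \<psi> x $ i * (\<Sum>j\<in>UNIV. flat g V x j * V x $ j))" for i
    unfolding ric pair_form_def
    by (simp add: algebra_simps sum_subtractf sum.distrib sum_distrib_left sum_distrib_right)
  then have ricci_V: "(\<Sum>j\<in>UNIV. ricci g j i x * V x $ j)
      = c * flat g V x i - (1/2) * (flat g V x i * pair_form \<psi> V x + \<psi> x $ i * sqnorm g V x)" for i
    unfolding flat_sym flat_sqnorm .
  have "(\<Sum>i\<in>UNIV. V x $ i * (c * flat g V x i
          - (1/2) * (flat g V x i * pair_form \<psi> V x + \<psi> x $ i * sqnorm g V x)))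
      = c * (\<Sum>i\<in>UNIV. flat g V x i * V x $ i)
        - (1/2) * ((\<Sum>i\<in>UNIV. flat g V x i * V x $ i) * pair_form \<psi> V x
                   + (\<Sum>i\<in>UNIV. \<psi> x $ i * V x $ i) * sqnorm g V x)"
    by (simp add: algebra_simps sum_subtractf sum.distrib sum_distrib_left sum_distrib_right)
  then show ?thesis
    unfolding ricci_V flat_sqnorm pair_form_def[symmetric] by (simp add: algebra_simps)
qed

lemma lie_g_torse_forming:
  assumes m: "riemannian_metric U g" and x: "x \<in> U" and tf: "torse_forming U g V a \<psi>"
  shows "lie_g V g i j x = 2 * a x * g x $ i $ j + \<psi> x $ i * flat g V x j + \<psi> x $ j * flat g V x i"
proof -
  let ?\<Gamma> = "\<lambda>j i p. \<Sum>k\<in>UNIV. g x $ j $ k * christoffel g k i p x"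
  have lower_pd_V: "(\<Sum>k\<in>UNIV. g x $ j $ k * pd i (\<lambda>y. V y $ k) x)
     = a x * g x $ i $ j + \<psi> x $ i * flat g V x j - (\<Sum>p\<in>UNIV. V x $ p * ?\<Gamma> j i p)" for i j
  proof -
    have "(\<Sum>k\<in>UNIV. g x $ j $ k * pd i (\<lambda>y. V y $ k) x)
      = (\<Sum>k\<in>UNIV. g x $ j $ k * a x * (if i = k then 1 else 0)) + \<psi> x $ i * flat g V x j
        - (\<Sum>k\<in>UNIV. \<Sum>p\<in>UNIV. V x $ p * (g x $ j $ k * christoffel g k i p x))"
      unfolding pd_torse_forming[OF tf x] flat_def
      by (simp add: algebra_simps sum.distrib sum_subtractf sum_distrib_left)
    also have "(\<Sum>k\<in>UNIV. \<Sum>p\<in>UNIV. V x $ p * (g x $ j $ k * christoffel g k i p x))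
       = (\<Sum>p\<in>UNIV. V x $ p * ?\<Gamma> j i p)"
      by (subst sum.swap) (simp add: sum_distrib_left)
    also have "(\<Sum>k\<in>UNIV. g x $ j $ k * a x * (if i = k then 1 else 0)) = a x * g x $ i $ j"
      by (simp add: mult_delta_simps metric_sym[OF m x, of j i] cong: if_cong)
    finally show ?thesis .
  qed
  have metric_compatible: "?\<Gamma> j i p + ?\<Gamma> i j p = pd p (\<lambda>y. g y $ i $ j) x" for p
    unfolding metric_christoffel_lower[OF m x] using pd_metric_sym[OF m x] by (simp add: algebra_simps)
  have "lie_g V g i j x = (\<Sum>k\<in>UNIV. V x $ k * pd k (\<lambda>y. g y $ i $ j) x)
      + (\<Sum>k\<in>UNIV. g x $ j $ k * pd i (\<lambda>y. V y $ k) x) + (\<Sum>k\<in>UNIV. g x $ i $ k * pd j (\<lambda>y. V y $ k) x)"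
    unfolding lie_g_def sum.distrib using metric_sym[OF m x] by simp
  also have "\<dots> = 2 * a x * g x $ i $ j + \<psi> x $ i * flat g V x j + \<psi> x $ j * flat g V x i
       + ((\<Sum>k\<in>UNIV. V x $ k * pd k (\<lambda>y. g y $ i $ j) x)
         - (\<Sum>p\<in>UNIV. V x $ p * (?\<Gamma> j i p + ?\<Gamma> i j p)))"
    unfolding lower_pd_V by (simp add: algebra_simps sum.distrib metric_sym[OF m x, of j i])
  finally show ?thesis unfolding metric_compatible by simp
qed

lemma ricci_soliton_torse_forming:
  assumes m: "riemannian_metric U g" and x: "x \<in> U"
    and sol: "almost_einstein_soliton U g V lam" and tf: "torse_forming U g V a \<psi>"
  shows "ricci g i j x = (scal g x / 2 + lam x - a x) * g x $ i $ j
           - (1/2) * (\<psi> x $ i * flat g V x j + \<psi> x $ j * flat g V x i)"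
proof -
  have "(1/2) * lie_g V g i j x + ricci g i j x = (scal g x / 2 + lam x) * g x $ i $ j"
    using sol x unfolding almost_einstein_soliton_def by blast
  then show ?thesis
    unfolding lie_g_torse_forming[OF m x tf] by (simp add: algebra_simps)
qed

lemma soliton_factor_solve:
  fixes n N c s lam a pv Va :: real
  assumes N: "N > 0" and scal: "s = n * c - pv" and factor: "c = s / 2 + lam - a"
    and ricci_V_V: "(c - pv) * N = (1 - n) * (Va - a * pv)"
  shows "lam = a + (n - 1) * (n - 2) / (2 * N) * Va
            - 1 / (2 * N) * ((n - 1) * (n - 2) * a + (n - 3) * N) * pv"
proof -
  have "2 * c = n * c - pv + 2 * lam - 2 * a"
    using scal factor by linarith
  then have c: "(2 - n) * c = 2 * (lam - a) - pv"
    by (simp add: algebra_simps)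
  have "2 * N * (lam - a) = N * ((2 - n) * c + pv)"
    unfolding c by simp
  also have "\<dots> = (2 - n) * ((c - pv) * N) + (3 - n) * pv * N"
    by (simp add: algebra_simps)
  also have "\<dots> = (n - 1) * (n - 2) * (Va - a * pv) + (3 - n) * pv * N"
    unfolding ricci_V_V by (simp add: algebra_simps)
  finally have "lam - a = ((n - 1) * (n - 2) * (Va - a * pv) + (3 - n) * pv * N) / (2 * N)"
    using N by (simp add: eq_divide_eq mult.commute)
  then show ?thesis
    using N by (simp add: diff_divide_distrib add_divide_distrib algebra_simps)
qed

lemma almost_einstein_soliton_torse_forming_codazzi:
  fixes g :: "real^'n::finite \<Rightarrow> real^'n^'n"
  assumes m: "riemannian_metric U g" and sol: "almost_einstein_soliton U g V lam"
    and tf: "torse_forming U g V a \<psi>" and cod: "codazzi U g \<psi>" and x: "x \<in> U"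
  shows "scal g x = real CARD('n) * (scal g x / 2 + lam x - a x) - pair_form \<psi> V x"
    and "(scal g x / 2 + lam x - a x - pair_form \<psi> V x) * sqnorm g V x
         = (1 - real CARD('n)) * (dir_deriv V a x - a x * pair_form \<psi> V x)"
proof -
  have sV: "smooth_field U V"
    using sol unfolding almost_einstein_soliton_def by blast
  note ric = ricci_soliton_torse_forming[OF m x sol tf]
  show "scal g x = real CARD('n) * (scal g x / 2 + lam x - a x) - pair_form \<psi> V x"
    using scal_of_ricci_form[where \<psi>=\<psi> and V=V, OF m x ric] .
  show "(scal g x / 2 + lam x - a x - pair_form \<psi> V x) * sqnorm g V x
         = (1 - real CARD('n)) * (dir_deriv V a x - a x * pair_form \<psi> V x)"
    using ricci_V_V_of_ricci_form[where \<psi>=\<psi> and V=V, OF m x ric] ricci_V_V_torse_forming_codazzi[OF m sV tf cod x]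
    by simp
qed

lemma almost_einstein_soliton_torse_forming_lam:
  fixes g :: "real^'n::finite \<Rightarrow> real^'n^'n"
  assumes "riemannian_metric U g" "almost_einstein_soliton U g V lam"
    and "torse_forming U g V a \<psi>" "codazzi U g \<psi>" "x \<in> U" and "V x \<noteq> 0"
  shows "lam x = a x
           + (real CARD('n) - 1) * (real CARD('n) - 2) / (2 * sqnorm g V x) * dir_deriv V a x
           - 1 / (2 * sqnorm g V x) * ((real CARD('n) - 1) * (real CARD('n) - 2) * a x
                + (real CARD('n) - 3) * sqnorm g V x) * pair_form \<psi> V x"
proof -
  note identities = almost_einstein_soliton_torse_forming_codazzi[OF assms(1-5)]
  show ?thesis
    by (rule soliton_factor_solve[OF sqnorm_pos[where V=V, OF assms(1,5,6)]
          identities(1) refl identities(2)])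
qed

lemma concircular_torse_forming:
  "concircular U g V a \<Longrightarrow> torse_forming U g V a (\<lambda>x. 0) \<and> codazzi U g (\<lambda>x. 0)"
  unfolding concircular_def torse_forming_def smooth_field_def codazzi_def cov_form_def
  by (simp add: smooth_on_const)

lemma almost_einstein_soliton_concircular:
  fixes g :: "real^'n::finite \<Rightarrow> real^'n^'n"
  assumes m: "riemannian_metric U g" and sol: "almost_einstein_soliton U g V lam"
    and cc: "concircular U g V (\<lambda>x. c)" and x: "x \<in> U" and V: "V x \<noteq> 0"
  shows "lam x = c" and "ricci g i j x = 0"
proof -
  note tf = concircular_torse_forming[OF cc, THEN conjunct1]
  note cod = concircular_torse_forming[OF cc, THEN conjunct2]
  have "(scal g x / 2 + lam x - c) * sqnorm g V x = 0"
    using almost_einstein_soliton_torse_forming_codazzi(2)[OF m sol tf cod x]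
    by (simp add: dir_deriv_def pair_form_def)
  then have \<kappa>: "scal g x / 2 + lam x - c = 0"
    using sqnorm_pos[where V=V, OF m x V] by simp
  moreover have "scal g x = 0"
    using almost_einstein_soliton_torse_forming_codazzi(1)[OF m sol tf cod x] \<kappa>
    by (simp add: pair_form_def)
  ultimately show "lam x = c" by simp
  show "ricci g i j x = 0"
    using ricci_soliton_torse_forming[OF m x sol tf] \<kappa> by simp
qed

theorem proposition3p1:
  fixes U :: "(real^'n::finite) set"
    and g :: "real^'n \<Rightarrow> real^'n^'n"
    and V :: "real^'n \<Rightarrow> real^'n"
    and lam :: "real^'n \<Rightarrow> real"
  assumes dim: "CARD('n) \<ge> 3"
    and metric: "riemannian_metric U g"
    and nonvanishing: "\<forall>x\<in>U. V x \<noteq> 0"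
    and soliton: "almost_einstein_soliton U g V lam"
  shows "(\<forall>a \<psi>. torse_forming U g V a \<psi> \<and> codazzi U g \<psi> \<longrightarrow>
            (\<forall>x\<in>U. lam x = a x
               + (real CARD('n) - 1) * (real CARD('n) - 2) / (2 * sqnorm g V x) * dir_deriv V a x
               - 1 / (2 * sqnorm g V x) * ((real CARD('n) - 1) * (real CARD('n) - 2) * a x
                    + (real CARD('n) - 3) * sqnorm g V x) * pair_form \<psi> V x))
       \<and> (\<forall>c::real. c \<noteq> 0 \<and> concircular U g V (\<lambda>x. c) \<longrightarrow>
            (\<forall>x\<in>U. lam x = c) \<and> (\<forall>x\<in>U. \<forall>i j. ricci g i j x = 0))"
  using almost_einstein_soliton_torse_forming_lam[OF metric soliton]
    almost_einstein_soliton_concircular[OF metric soliton] nonvanishing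
  by blast

end
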